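(* Fix an integer $n\ge 1$ and a real number $\epsilon>0$. Then there exist finitely many series of $\mathbb{Q}$-factorial toric singularities in $T^n$ such that an $n$-dimensional $\mathbb{Q}$-factorial toric singularity has minimal log-discrepancy greater than $\epsilon$ if and only if it belongs to at least one of these series. The same holds with "greater than $\epsilon$" replaced by "greater than or equal to $\epsilon$".
   Context: Let $T^n=\mathbb{R}^n/\mathbb{Z}^n$, identified with the set of points $(x_1,\dots,x_n)$ with $0\le x_i<1$, and let $e_1,\dots,e_n$ be the standard basis of $\mathbb{R}^n$. An $n$-dimensional $\mathbb{Q}$-factorial toric singularity is given by a rational simplicial cone in $\mathbb{R}^n$ together with a lattice; after a linear change of coordinates sending the primitive lattice points of the rays of the cone to $e_1,\dots,e_n$, the cone is the standard positive orthant and the lattice $L$ contains $\mathbb{Z}^n$ with finite index. Thus such a singularity is encoded by the finite subgroup $G=L/\mathbb{Z}^n\subset T^n$, which satisfies $G\cap (\mathbb{R}/\mathbb{Z})\cdot e_i=\{0\}$ for every $i$; conversely every finite subgroup $G\subset T^n$ with this property defines such a singularity (standard orthant, lattice $L=$ preimage of $G$ in $\mathbb{R}^n$). The minimal log-discrepancy of the singularity defined by $G$ is the minimum, over the nonzero elements of $G$, of the sum of coordinates $x_1+\dots+x_n$ of the element written with $0\le x_i<1$. A series of $\mathbb{Q}$-factorial toric singularities is a closed subgroup $V\subset T^n$ together with finitely many proper closed subgroups $V_i\subset V$ and, for each $i$, finitely many proper closed subgroups $V_{ij}\subset V_i$. A toric singularity belongs to this series if and only if it is defined by a finite subgroup $G\subset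 V$ such that $G\cap V_i\subset\bigcup_j V_{ij}$ for all $i$. *)

theory Defs
  imports "HOL-Analysis.Analysis"
begin

text \<open>The torus T^n = R^n/Z^n, with n = CARD('n), represented by the fundamental
  domain [0,1)^n inside real^'n.  The quotient map R^n -> T^n is tproj.\<close>

definition torus :: "(real ^ 'n) set" where
  "torus = {x. \<forall>i. 0 \<le> x $ i \<and> x $ i < 1}"

definition tproj :: "real ^ 'n \<Rightarrow> real ^ 'n" where
  "tproj x = (\<chi> i. frac (x $ i))"

definition tadd :: "real ^ 'n \<Rightarrow> real ^ 'n \<Rightarrow> real ^ 'n" where
  "tadd x y = tproj (x + y)"

definition tneg :: "real ^ 'n \<Rightarrow> real ^ 'n" where
  "tneg x = tproj (- x)"

definition tsubgroup :: "(real ^ 'n) set \<Rightarrow> bool" where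
  "tsubgroup H \<longleftrightarrow> H \<subseteq> torus \<and> 0 \<in> H \<and>
     (\<forall>x\<in>H. \<forall>y\<in>H. tadd x y \<in> H) \<and> (\<forall>x\<in>H. tneg x \<in> H)"

text \<open>Closed in the quotient topology of T^n: the preimage in R^n is closed.\<close>
definition closed_tsubgroup :: "(real ^ 'n) set \<Rightarrow> bool" where
  "closed_tsubgroup H \<longleftrightarrow> tsubgroup H \<and> closed (tproj -` H)"

definition taxis :: "'n \<Rightarrow> (real ^ 'n) set" where
  "taxis i = tproj ` {t *\<^sub>R axis i 1 | t. True}"

definition qf_toric :: "(real ^ 'n) set \<Rightarrow> bool" where
  "qf_toric G \<longleftrightarrow> tsubgroup G \<and> finite G \<and> (\<forall>i. G \<inter> taxis i = {0})"

text \<open>Minimal log discrepancy: minimum of coordinate sums over nonzero elements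
  (as an extended real; +infinity for the trivial group, where the min is empty).\<close>
definition mld :: "(real ^ 'n) set \<Rightarrow> ereal" where
  "mld G = Inf {ereal (\<Sum>i\<in>UNIV. g $ i) | g. g \<in> G \<and> g \<noteq> 0}"

text \<open>A series: (V, [(V_i, [V_ij, ...]), ...]).\<close>
type_synonym ('n) tseries = "(real ^ 'n) set \<times> ((real ^ 'n) set \<times> (real ^ 'n) set list) list"

definition is_series :: "('n::finite) tseries \<Rightarrow> bool" where
  "is_series S \<longleftrightarrow> closed_tsubgroup (fst S) \<and>
     (\<forall>(Vi, Vijs) \<in> set (snd S). closed_tsubgroup Vi \<and> Vi \<subset> fst S \<and>
        (\<forall>Vij \<in> set Vijs. closed_tsubgroup Vij \<and> Vij \<subset> Vi))"

definition belongs :: "(real ^ 'n) set \<Rightarrow> ('n::finite) tseries \<Rightarrow> bool" where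
  "belongs G S \<longleftrightarrow> qf_toric G \<and> G \<subseteq> fst S \<and>
     (\<forall>(Vi, Vijs) \<in> set (snd S). G \<inter> Vi \<subseteq> \<Union> (set Vijs))"

end

theory Submission
  imports Defs "HOL-Real_Asymp.Real_Asymp" "HOL-Library.Function_Algebras"
begin

text \<open>The subgroups \<open>perp S = {x \<in> T\<^sup>n. \<forall>a\<in>S. \<langle>a, x\<rangle> \<in> \<int>}\<close>, for sets \<open>S\<close> of integer
  vectors, are closed and satisfy the descending chain condition, because their annihilators are
  subgroups of \<open>\<int>\<^sup>n\<close>.  Call a point bad if it is nonzero with coordinate sum \<open>\<le> \<epsilon>\<close> (resp.
  \<open>< \<epsilon>\<close>); we classify by finitely many series the finite subgroups \<open>G \<subseteq> perp S\<close> without bad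
  points, by well-founded induction on \<open>perp S\<close>.  Either every bad point of \<open>V = perp S\<close> lies on a
  coordinate section \<open>{x\<^sub>i = 0}\<close> not containing \<open>V\<close>: then \<open>G\<close> has no bad point iff no
  \<open>G \<inter> {x\<^sub>i = 0}\<close> has one, and series for these sections combine.  Or the bad points contain a
  neighbourhood in \<open>V\<close> of some \<open>p \<in> V\<close>: then a Fourier argument with the kernel
  \<open>\<Prod>\<^sub>i cos\<^sup>2(\<pi>(x\<^sub>i - p\<^sub>i))\<^sup>M\<close> shows that every admissible \<open>G\<close> is annihilated by one of
  finitely many integer vectors \<open>a\<close> of bounded size with \<open>\<langle>a, p\<rangle> \<notin> \<int>\<close>, so \<open>G\<close> lies in one of
  the finitely many smaller subgroups \<open>perp (insert a S)\<close>.\<close>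

section \<open>Torus arithmetic and the subgroups perp S\<close>

lemma tproj_nth [simp]: "tproj x $ i = frac (x $ i)"
  by (simp add: tproj_def)

lemma tproj_in_torus: "tproj x \<in> torus"
  by (simp add: torus_def frac_lt_1)

lemma tproj_torus: "x \<in> torus \<Longrightarrow> tproj x = x"
  by (simp add: torus_def vec_eq_iff frac_eq)

lemma torus_nth: "x \<in> torus \<Longrightarrow> 0 \<le> x $ i \<and> x $ i < 1"
  by (simp add: torus_def)

lemma torus_nth_Ints_iff: "x \<in> torus \<Longrightarrow> x $ i \<in> \<int> \<longleftrightarrow> x $ i = 0"
  using torus_nth[of x i] by (auto simp: frac_eq_0_iff[symmetric] frac_eq)

lemma zero_in_torus: "0 \<in> torus"
  by (simp add: torus_def)

lemma tproj_add_tproj: "tproj (tproj x + y) = tproj (x + y)"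
proof -
  have "frac (frac a + b) = frac (a + b)" for a b :: real
    by (simp add: frac_def algebra_simps flip: of_int_diff)
  then show ?thesis
    by (simp add: tproj_def vec_eq_iff)
qed

lemma tproj_add_tproj_right: "tproj (x + tproj y) = tproj (x + y)"
  using tproj_add_tproj[of y x] by (simp add: add.commute)

lemma tadd_tneg_cancel:
  assumes "g \<in> torus"
  shows "tadd (tneg h) (tadd h g) = g" and "tadd h (tadd (tneg h) g) = g"
  using assms by (simp_all add: tadd_def tneg_def tproj_add_tproj tproj_add_tproj_right tproj_torus)

definition pairing :: "('n::finite \<Rightarrow> int) \<Rightarrow> real^'n \<Rightarrow> real" where
  "pairing a x = (\<Sum>i\<in>UNIV. of_int (a i) * x $ i)"

lemma pairing_add_right: "pairing a (x + y) = pairing a x + pairing a y"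
  by (simp add: pairing_def algebra_simps sum.distrib)

lemma pairing_diff_right: "pairing a (x - y) = pairing a x - pairing a y"
  by (simp add: pairing_def algebra_simps sum_subtractf)

lemma pairing_minus_right: "pairing a (- x) = - pairing a x"
  by (simp add: pairing_def sum_negf)

lemma pairing_add_left: "pairing (a + b) x = pairing a x + pairing b x"
  by (simp add: pairing_def algebra_simps sum.distrib)

lemma pairing_minus_left: "pairing (- a) x = - pairing a x"
  by (simp add: pairing_def sum_negf)

lemma pairing_zero_right [simp]: "pairing a 0 = 0"
  by (simp add: pairing_def)

lemma pairing_zero_left [simp]: "pairing 0 x = 0"
  by (simp add: pairing_def)

lemma pairing_coordinate: "pairing (\<lambda>k. if k = i then 1 else 0) x = x $ i"
proof -
  have "pairing (\<lambda>k. if k = i then 1 else 0) x = (\<Sum>k\<in>UNIV. if k = i then x $ k else 0)"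
    unfolding pairing_def by (intro sum.cong) auto
  then show ?thesis
    by simp
qed

lemma pairing_tproj_diff_Ints: "pairing a (tproj x) - pairing a x \<in> \<int>"
proof -
  have "pairing a (tproj x) - pairing a x = - (\<Sum>i\<in>UNIV. of_int (a i * \<lfloor>x $ i\<rfloor>))"
    by (simp add: pairing_def frac_def algebra_simps flip: sum_subtractf sum_negf)
  also have "\<dots> \<in> \<int>"
    by (intro Ints_minus Ints_sum Ints_of_int)
  finally show ?thesis .
qed

lemma Ints_iff_diff_Ints: "(x::real) - y \<in> \<int> \<Longrightarrow> x \<in> \<int> \<longleftrightarrow> y \<in> \<int>"
  by (metis Ints_add Ints_diff add_diff_cancel_left' diff_add_cancel)

lemma pairing_tproj_Ints_iff: "pairing a (tproj x) \<in> \<int> \<longleftrightarrow> pairing a x \<in> \<int>"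
  by (rule Ints_iff_diff_Ints[OF pairing_tproj_diff_Ints])

lemma pairing_tadd_diff_Ints: "pairing a (tadd h g) - (pairing a h + pairing a g) \<in> \<int>"
  using pairing_tproj_diff_Ints[of a "h + g"] by (simp add: tadd_def pairing_add_right)

definition perp :: "('n::finite \<Rightarrow> int) set \<Rightarrow> (real^'n) set" where
  "perp S = {x \<in> torus. \<forall>a\<in>S. pairing a x \<in> \<int>}"

lemma perp_subset_torus: "perp S \<subseteq> torus"
  by (auto simp: perp_def)

lemma perp_empty [simp]: "perp {} = torus"
  by (simp add: perp_def)

lemma perp_insert: "perp (insert a S) = perp S \<inter> {x. pairing a x \<in> \<int>}"
  by (auto simp: perp_def)

lemma closed_tsubgroup_perp: "closed_tsubgroup (perp S)"
proof -
  have "tsubgroup (perp S)"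
    by (auto simp: tsubgroup_def perp_def zero_in_torus tadd_def tneg_def tproj_in_torus
        pairing_tproj_Ints_iff pairing_add_right pairing_minus_right)
  moreover have "tproj -` perp S = (\<Inter>a\<in>S. pairing a -` \<int>)"
    by (auto simp: perp_def tproj_in_torus pairing_tproj_Ints_iff)
  moreover have "continuous_on UNIV (pairing a)" for a
    unfolding pairing_def by (intro continuous_intros)
  ultimately show ?thesis
    unfolding closed_tsubgroup_def by (auto intro!: closed_INT closed_vimage)
qed

lemma tproj_reflect_in_perp:
  assumes "x \<in> perp S" "y \<in> perp S"
  shows "tproj (x + x - y) \<in> perp S"
proof -
  have "pairing a (x + x - y) = pairing a x + pairing a x - pairing a y" for a
    by (simp only: pairing_add_right pairing_diff_right)
  then show ?thesis
    using assms by (auto simp: perp_def tproj_in_torus pairing_tproj_Ints_iff)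
qed

section \<open>The descending chain condition\<close>

definition add_subgroup :: "'a::ab_group_add set \<Rightarrow> bool" where
  "add_subgroup L \<longleftrightarrow> 0 \<in> L \<and> (\<forall>a\<in>L. \<forall>b\<in>L. a + b \<in> L) \<and> (\<forall>a\<in>L. - a \<in> L)"

lemma add_subgroup_int_mult:
  assumes "add_subgroup H" "a \<in> H"
  shows "k * (a::int) \<in> H"
proof -
  have nat_mult: "of_nat m * a \<in> H" for m
    using assms by (induction m) (auto simp: add_subgroup_def algebra_simps)
  show ?thesis
  proof (cases "k \<ge> 0")
    case True
    then show ?thesis using nat_mult[of "nat k"] by simp
  next
    case False
    then show ?thesis
      using nat_mult[of "nat (- k)"] assms(1) by (force simp: add_subgroup_def)
  qed
qed

definition least_pos :: "int set \<Rightarrow> nat" where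
  "least_pos H = (LEAST d. d > 0 \<and> int d \<in> H)"

lemma least_pos_subgroup:
  assumes "add_subgroup H" "H \<noteq> {0}"
  shows "least_pos H > 0" and "int (least_pos H) \<in> H" and "\<And>h. h \<in> H \<Longrightarrow> int (least_pos H) dvd h"
proof -
  obtain x where x: "x \<in> H" "x \<noteq> 0"
    using assms by (auto simp: add_subgroup_def)
  then have "nat \<bar>x\<bar> > 0 \<and> int (nat \<bar>x\<bar>) \<in> H"
    using assms(1) by (cases "x > 0") (auto simp: add_subgroup_def)
  then have least: "least_pos H > 0 \<and> int (least_pos H) \<in> H"
    unfolding least_pos_def by (rule LeastI)
  then show "least_pos H > 0" "int (least_pos H) \<in> H"
    by auto
  fix h assume h: "h \<in> H"
  define d where "d = int (least_pos H)"
  have "- (h div d) * d \<in> H"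
    using least assms(1) by (intro add_subgroup_int_mult) (auto simp: d_def)
  then have "h + - (h div d) * d \<in> H"
    using h assms(1) unfolding add_subgroup_def by blast
  moreover have "h + - (h div d) * d = h mod d"
    by (simp add: minus_div_mult_eq_mod[symmetric])
  ultimately have "h mod d \<in> H"
    by simp
  moreover have "0 \<le> h mod d" "h mod d < d"
    using least by (auto simp: d_def)
  ultimately have "h mod d = 0"
    using Least_le[of "\<lambda>d. d > 0 \<and> int d \<in> H" "nat (h mod d)"]
    by (fastforce simp: least_pos_def d_def)
  then show "int (least_pos H) dvd h"
    by (auto simp: d_def)
qed

text \<open>A strictly larger nonzero subgroup of \<open>\<int>\<close> has a strictly smaller least positive element.\<close>

lemma wf_add_subgroup_int: "wf {(H', H). add_subgroup (H::int set) \<and> add_subgroup H' \<and> H \<subset> H'}"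
proof (rule wf_subset)
  let ?f = "\<lambda>H. (if H = {0} then 1::nat else 0, least_pos H)"
  show "wf (inv_image (less_than <*lex*> less_than) ?f)"
    by auto
  show "{(H', H). add_subgroup H \<and> add_subgroup H' \<and> H \<subset> H'} \<subseteq> inv_image (less_than <*lex*> less_than) ?f"
  proof (rule subrelI)
    fix H' H :: "int set"
    assume "(H', H) \<in> {(H', H). add_subgroup H \<and> add_subgroup H' \<and> H \<subset> H'}"
    then have H: "add_subgroup H" and H': "add_subgroup H'" and sub: "H \<subset> H'"
      by auto
    have "0 \<in> H"
      using H by (simp add: add_subgroup_def)
    then have H'_nonzero: "H' \<noteq> {0}"
      using sub by auto
    show "(H', H) \<in> inv_image (less_than <*lex*> less_than) ?f"
    proof (cases "H = {0}")
      case False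
      have "least_pos H' \<le> least_pos H"
        unfolding least_pos_def[of H'] using least_pos_subgroup[OF H False] sub by (intro Least_le) auto
      moreover have "least_pos H' \<noteq> least_pos H"
      proof
        assume "least_pos H' = least_pos H"
        then have "H' \<subseteq> H"
          using least_pos_subgroup(3)[OF H' H'_nonzero]
            add_subgroup_int_mult[OF H least_pos_subgroup(2)[OF H False]]
          by (metis dvdE mult.commute subsetI)
        then show False using sub by auto
      qed
      ultimately show ?thesis
        using False H'_nonzero by simp
    qed (use H'_nonzero in simp)
  qed
qed

lemma add_subgroup_image_coordinate:
  assumes "add_subgroup (L::('n \<Rightarrow> 'a::ab_group_add) set)"
  shows "add_subgroup ((\<lambda>a. a j) ` L)"
  unfolding add_subgroup_def
proof (intro conjI ballI)
  show "0 \<in> (\<lambda>a. a j) ` L"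
    using assms by (intro rev_image_eqI[of 0]) (auto simp: add_subgroup_def)
next
  fix x y assume "x \<in> (\<lambda>a. a j) ` L" "y \<in> (\<lambda>a. a j) ` L"
  then obtain a b where "a \<in> L" "b \<in> L" "x = a j" "y = b j"
    by auto
  moreover have "a + b \<in> L" "- a \<in> L"
    using assms \<open>a \<in> L\<close> \<open>b \<in> L\<close> by (auto simp: add_subgroup_def)
  ultimately show "x + y \<in> (\<lambda>a. a j) ` L" "- x \<in> (\<lambda>a. a j) ` L"
    by (auto intro: rev_image_eqI)
qed

lemma add_subgroup_psubset_coordinate:
  assumes L: "add_subgroup L" "add_subgroup L'" "L \<subset> L'"
  shows "(\<lambda>a. a j) ` L \<subset> (\<lambda>a. a j) ` L' \<or>
         (\<lambda>a. a j) ` L' = (\<lambda>a. a j) ` L \<and> {a\<in>L. a j = 0} \<subset> {a\<in>L'. a j = (0::'a::ab_group_add)}"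
proof (cases "(\<lambda>a. a j) ` L \<subset> (\<lambda>a. a j) ` L'")
  case False
  have "(\<lambda>a. a j) ` L \<subseteq> (\<lambda>a. a j) ` L'"
    using L(3) by (intro image_mono) auto
  then have image_eq: "(\<lambda>a. a j) ` L' = (\<lambda>a. a j) ` L"
    using False by (metis psubsetI)
  have kernel_sub: "{a\<in>L. a j = 0} \<subseteq> {a\<in>L'. a j = 0}"
    using L(3) by auto
  have "{a\<in>L. a j = 0} \<noteq> {a\<in>L'. a j = 0}"
  proof
    assume kernel_eq: "{a\<in>L. a j = 0} = {a\<in>L'. a j = 0}"
    have "L' \<subseteq> L"
    proof
      fix a' assume a': "a' \<in> L'"
      then have "a' j \<in> (\<lambda>a. a j) ` L'"
        by blast
      then have "a' j \<in> (\<lambda>a. a j) ` L"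
        by (simp only: image_eq)
      then obtain a where a: "a' j = a j" "a \<in> L"
        by (rule imageE)
      have "a' + - a \<in> L'"
        using a' a(2) L unfolding add_subgroup_def by blast
      moreover have "(a' + - a) j = 0"
        using a(1) by simp
      ultimately have "a' + - a \<in> {b\<in>L'. b j = 0}"
        by simp
      then have "a' + - a \<in> L"
        by (simp only: kernel_eq[symmetric] mem_Collect_eq)
      then have "(a' + - a) + a \<in> L"
        using a(2) L(1) unfolding add_subgroup_def by blast
      then show "a' \<in> L"
        by simp
    qed
    then show False
      using L(3) by auto
  qed
  with image_eq kernel_sub show ?thesis
    by (intro disjI2 conjI psubsetI)
qed simp

text \<open>Ascending chains of subgroups of \<open>\<int>\<^sup>I\<close> stabilise: induct on \<open>I\<close>, ordering subgroups
  lexicographically by their image and their kernel under one coordinate.\<close>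

lemma wf_add_subgroup_supported:
  assumes "finite I"
  shows "wf {(L', L). add_subgroup (L::('n \<Rightarrow> int) set) \<and> add_subgroup L' \<and> L \<subset> L' \<and>
                      (\<forall>a\<in>L'. \<forall>i. i \<notin> I \<longrightarrow> a i = 0)}"
  using assms
proof (induction I rule: finite_induct)
  case empty
  have "{(L', L). add_subgroup (L::('n \<Rightarrow> int) set) \<and> add_subgroup L' \<and> L \<subset> L' \<and>
                  (\<forall>a\<in>L'. \<forall>i. i \<notin> {} \<longrightarrow> a i = 0)} = {}"
  proof (intro equals0I)
    fix p assume "p \<in> {(L', L). add_subgroup (L::('n \<Rightarrow> int) set) \<and> add_subgroup L' \<and> L \<subset> L' \<and>
                                (\<forall>a\<in>L'. \<forall>i. i \<notin> {} \<longrightarrow> a i = 0)}"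
    then obtain L' L :: "('n \<Rightarrow> int) set" where "add_subgroup L" "L \<subset> L'" "\<forall>a\<in>L'. a = 0"
      by (auto simp: fun_eq_iff)
    then show False
      by (auto simp: add_subgroup_def)
  qed
  then show ?case
    using wf_on_bot[of UNIV] by (simp only:)
next
  case (insert j I)
  let ?RZ = "{(H', H). add_subgroup (H::int set) \<and> add_subgroup H' \<and> H \<subset> H'}"
  let ?R = "{(L', L). add_subgroup (L::('n \<Rightarrow> int) set) \<and> add_subgroup L' \<and> L \<subset> L' \<and>
                      (\<forall>a\<in>L'. \<forall>i. i \<notin> I \<longrightarrow> a i = 0)}"
  let ?f = "\<lambda>L. ((\<lambda>a. a j) ` L, {a\<in>L. a j = 0})"
  show ?case
  proof (rule wf_subset)
    show "wf (inv_image (?RZ <*lex*> ?R) ?f)"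
      by (intro wf_inv_image wf_lex_prod wf_add_subgroup_int insert.IH)
    show "{(L', L). add_subgroup L \<and> add_subgroup L' \<and> L \<subset> L' \<and> (\<forall>a\<in>L'. \<forall>i. i \<notin> insert j I \<longrightarrow> a i = 0)}
      \<subseteq> inv_image (?RZ <*lex*> ?R) ?f"
    proof (rule subrelI)
      fix L' L :: "('n \<Rightarrow> int) set"
      assume "(L', L) \<in> {(L', L). add_subgroup L \<and> add_subgroup L' \<and> L \<subset> L' \<and>
                                  (\<forall>a\<in>L'. \<forall>i. i \<notin> insert j I \<longrightarrow> a i = 0)}"
      then have L: "add_subgroup L" "add_subgroup L'" "L \<subset> L'"
        and supp: "\<forall>a\<in>L'. \<forall>i. i \<notin> insert j I \<longrightarrow> a i = 0"
        by auto
      have ker: "add_subgroup {a\<in>L. a j = 0}" "add_subgroup {a\<in>L'. a j = 0}"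
        using L(1,2) by (auto simp: add_subgroup_def)
      have ker_supp: "\<forall>a\<in>{a\<in>L'. a j = 0}. \<forall>i. i \<notin> I \<longrightarrow> a i = 0"
        using supp by auto
      from add_subgroup_psubset_coordinate[OF L, of j]
      show "(L', L) \<in> inv_image (?RZ <*lex*> ?R) ?f"
      proof
        assume "(\<lambda>a. a j) ` L \<subset> (\<lambda>a. a j) ` L'"
        then have "((\<lambda>a. a j) ` L', (\<lambda>a. a j) ` L) \<in> ?RZ"
          using add_subgroup_image_coordinate[OF L(1)] add_subgroup_image_coordinate[OF L(2)]
          by (simp only: mem_Collect_eq prod.case)
        then show ?thesis
          unfolding in_inv_image in_lex_prod by (rule disjI1)
      next
        assume "(\<lambda>a. a j) ` L' = (\<lambda>a. a j) ` L \<and> {a\<in>L. a j = 0} \<subset> {a\<in>L'. a j = 0}"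
        then have "(\<lambda>a. a j) ` L' = (\<lambda>a. a j) ` L" "{a\<in>L. a j = 0} \<subset> {a\<in>L'. a j = 0}"
          by simp_all
        moreover have "({a\<in>L'. a j = 0}, {a\<in>L. a j = 0}) \<in> ?R"
          unfolding mem_Collect_eq prod.case using ker calculation(2) ker_supp by (intro conjI)
        ultimately show ?thesis
          unfolding in_inv_image in_lex_prod by (intro disjI2 conjI)
      qed
    qed
  qed
qed

lemma wf_add_subgroup_fun: "wf {(L', L). add_subgroup (L::('n::finite \<Rightarrow> int) set) \<and> add_subgroup L' \<and> L \<subset> L'}"
  using wf_add_subgroup_supported[of "UNIV :: 'n set"]
  by (simp only: finite UNIV_I not_True_eq_False simp_thms Ball_def)

definition annihilator :: "(real^'n) set \<Rightarrow> ('n::finite \<Rightarrow> int) set" where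
  "annihilator V = {a. \<forall>x\<in>V. pairing a x \<in> \<int>}"

lemma add_subgroup_annihilator: "add_subgroup (annihilator V)"
  by (auto simp: add_subgroup_def annihilator_def pairing_add_left pairing_minus_left)

lemma perp_antimono: "S \<subseteq> T \<Longrightarrow> perp T \<subseteq> perp S"
  by (auto simp: perp_def)

lemma annihilator_antimono: "V \<subseteq> W \<Longrightarrow> annihilator W \<subseteq> annihilator V"
  by (auto simp: annihilator_def)

lemma perp_annihilator_perp: "perp (annihilator (perp S)) = perp S"
proof
  show "perp S \<subseteq> perp (annihilator (perp S))"
    unfolding perp_def[of "annihilator (perp S)"] by (auto simp: annihilator_def perp_subset_torus[THEN subsetD])
  have "S \<subseteq> annihilator (perp S)"
    by (auto simp: perp_def annihilator_def)
  then show "perp (annihilator (perp S)) \<subseteq> perp S"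
    by (rule perp_antimono)
qed

lemma wf_perp_psubset: "wf {(S', S). perp S' \<subset> (perp S :: (real^'n::finite) set)}"
proof (rule wf_subset)
  let ?R = "{(L', L). add_subgroup (L::('n \<Rightarrow> int) set) \<and> add_subgroup L' \<and> L \<subset> L'}"
  show "wf (inv_image ?R (\<lambda>S. annihilator (perp S)))"
    using wf_add_subgroup_fun by (rule wf_inv_image)
  show "{(S', S). perp S' \<subset> perp S} \<subseteq> inv_image ?R (\<lambda>S. annihilator (perp S))"
  proof (rule subrelI)
    fix S' S :: "('n \<Rightarrow> int) set"
    assume "(S', S) \<in> {(S', S). perp S' \<subset> perp S}"
    then have psub: "perp S' \<subset> perp S"
      by simp
    then have "annihilator (perp S) \<subseteq> annihilator (perp S')"
      by (intro annihilator_antimono) blast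
    moreover have "annihilator (perp S) \<noteq> annihilator (perp S')"
    proof
      assume "annihilator (perp S) = annihilator (perp S')"
      then have "perp (annihilator (perp S)) = perp (annihilator (perp S'))"
        by (rule arg_cong)
      then show False
        using psub by (simp only: perp_annihilator_perp)
    qed
    ultimately show "(S', S) \<in> inv_image ?R (\<lambda>S. annihilator (perp S))"
      unfolding in_inv_image mem_Collect_eq prod.case using add_subgroup_annihilator by blast
  qed
qed

section \<open>Characters and the Fourier argument\<close>

definition e2pi :: "real \<Rightarrow> complex" where
  "e2pi t = cis (2 * pi * t)"

lemma e2pi_add: "e2pi (s + t) = e2pi s * e2pi t"
  by (simp add: e2pi_def cis_mult algebra_simps)

lemma e2pi_zero [simp]: "e2pi 0 = 1"
  by (simp add: e2pi_def)

lemma e2pi_eq_1_iff: "e2pi t = 1 \<longleftrightarrow> t \<in> \<int>"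
proof
  assume "e2pi t = 1"
  then have "cos (2 * pi * t) = 1"
    by (simp add: e2pi_def complex_eq_iff)
  then have "\<exists>n::int. 2 * pi * t = n * 2 * pi"
    using cos_one_2pi_int by blast
  then obtain n :: int where "2 * pi * t = real_of_int n * 2 * pi"
    by blast
  then show "t \<in> \<int>"
    by simp
qed (simp add: e2pi_def)

lemma e2pi_sum: "(\<Prod>i\<in>A. e2pi (f i)) = e2pi (\<Sum>i\<in>A. f i)"
  by (induction A rule: infinite_finite_induct) (simp_all add: e2pi_add)

lemma e2pi_power: "e2pi t ^ k = e2pi (real k * t)"
  by (induction k) (simp_all add: algebra_simps flip: e2pi_add)

text \<open>Orthogonality of characters: translation by an element \<open>h\<close> of \<open>G\<close> multiplies the sum by
  \<open>e2pi (pairing a h)\<close>.\<close>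

lemma sum_e2pi_pairing_subgroup:
  assumes "tsubgroup G" "finite G"
  shows "(\<Sum>g\<in>G. e2pi (pairing a g)) = (if \<forall>g\<in>G. pairing a g \<in> \<int> then of_nat (card G) else 0)"
proof (cases "\<forall>g\<in>G. pairing a g \<in> \<int>")
  case True
  then have "(\<Sum>g\<in>G. e2pi (pairing a g)) = (\<Sum>g\<in>G. 1)"
    by (intro sum.cong refl) (simp add: e2pi_eq_1_iff)
  then show ?thesis
    using True by simp
next
  case False
  then obtain h where h: "h \<in> G" "pairing a h \<notin> \<int>"
    by auto
  have G: "\<And>g. g \<in> G \<Longrightarrow> g \<in> torus"
    "\<And>g. g \<in> G \<Longrightarrow> tadd h g \<in> G" "\<And>g. g \<in> G \<Longrightarrow> tadd (tneg h) g \<in> G"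
    using assms(1) h(1) by (auto simp: tsubgroup_def)
  have "bij_betw (tadd h) G G"
    by (rule bij_betwI[of _ _ _ "tadd (tneg h)"]) (simp_all add: G tadd_tneg_cancel)
  then have "(\<Sum>g\<in>G. e2pi (pairing a g)) = (\<Sum>g\<in>G. e2pi (pairing a (tadd h g)))"
    by (rule sum.reindex_bij_betw[symmetric])
  also have "\<dots> = (\<Sum>g\<in>G. e2pi (pairing a h) * e2pi (pairing a g))"
  proof (intro sum.cong refl)
    fix g
    have "e2pi (pairing a (tadd h g)) =
          e2pi (pairing a h + pairing a g) * e2pi (pairing a (tadd h g) - (pairing a h + pairing a g))"
      by (simp flip: e2pi_add)
    then show "e2pi (pairing a (tadd h g)) = e2pi (pairing a h) * e2pi (pairing a g)"
      using pairing_tadd_diff_Ints[of a h g] by (simp add: e2pi_eq_1_iff e2pi_add)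
  qed
  also have "\<dots> = e2pi (pairing a h) * (\<Sum>g\<in>G. e2pi (pairing a g))"
    by (simp add: sum_distrib_left)
  finally have "(1 - e2pi (pairing a h)) * (\<Sum>g\<in>G. e2pi (pairing a g)) = 0"
    by (simp add: algebra_simps)
  moreover have "e2pi (pairing a h) \<noteq> 1"
    using h(2) by (simp add: e2pi_eq_1_iff)
  ultimately have "(\<Sum>g\<in>G. e2pi (pairing a g)) = 0"
    by simp
  then show ?thesis
    by (simp only: if_not_P[OF False])
qed

lemma sum_e2pi_pairing_subgroup_translate:
  assumes "tsubgroup G" "finite G"
  shows "(\<Sum>g\<in>G. e2pi (pairing a (g - p))) =
           (if \<forall>g\<in>G. pairing a g \<in> \<int> then of_nat (card G) * e2pi (- pairing a p) else 0)"
proof -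
  have "(\<Sum>g\<in>G. e2pi (pairing a (g - p))) = e2pi (- pairing a p) * (\<Sum>g\<in>G. e2pi (pairing a g))"
    by (simp add: pairing_diff_right sum_distrib_left flip: e2pi_add)
  then show ?thesis
    by (simp add: sum_e2pi_pairing_subgroup[OF assms])
qed

definition raised_cosine :: "real \<Rightarrow> real" where
  "raised_cosine t = (1 + cos (2 * pi * t)) / 2"

lemma raised_cosine_nonneg: "0 \<le> raised_cosine t"
proof -
  have "-1 \<le> cos (2 * pi * t)"
    by (rule cos_ge_minus_one)
  then have "0 \<le> 1 + cos (2 * pi * t)"
    by linarith
  then show ?thesis
    by (simp add: raised_cosine_def)
qed

lemma raised_cosine_le_1: "raised_cosine t \<le> 1"
proof -
  have "cos (2 * pi * t) \<le> 1"
    by (rule cos_le_one)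
  then show ?thesis
    by (simp add: raised_cosine_def)
qed

lemma raised_cosine_e2pi: "complex_of_real (raised_cosine t) = e2pi (- t) * ((1 + e2pi t) / 2)\<^sup>2"
proof -
  have "e2pi (- t) * (1 + e2pi t)\<^sup>2 = e2pi (- t) + 2 + e2pi t"
    by (simp add: power2_eq_square algebra_simps flip: e2pi_add)
  also have "\<dots> = 2 + 2 * complex_of_real (cos (2 * pi * t))"
    by (simp add: e2pi_def complex_eq_iff)
  finally show ?thesis
    by (simp add: raised_cosine_def power_divide field_simps)
qed

lemma raised_cosine_power_expansion:
  "complex_of_real (raised_cosine t ^ M) =
     (\<Sum>k\<le>2 * M. of_real (real (2 * M choose k) / 4 ^ M) * e2pi ((real k - real M) * t))"
proof -
  have "complex_of_real (raised_cosine t ^ M) = e2pi (- real M * t) * ((1 + e2pi t) / 2) ^ (2 * M)"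
    by (simp add: raised_cosine_e2pi power_mult_distrib e2pi_power power_mult)
  also have "((1 + e2pi t) / 2) ^ (2 * M) = (e2pi t + 1) ^ (2 * M) / 4 ^ M"
    by (simp add: power_divide power_mult add.commute)
  also have "(e2pi t + 1) ^ (2 * M) = (\<Sum>k\<le>2 * M. of_nat (2 * M choose k) * e2pi t ^ k)"
    by (simp add: binomial_ring)
  finally have "complex_of_real (raised_cosine t ^ M) =
      (\<Sum>k\<le>2 * M. of_nat (2 * M choose k) / 4 ^ M * (e2pi (- real M * t) * e2pi t ^ k))"
    by (simp add: sum_distrib_left sum_divide_distrib algebra_simps)
  also have "\<dots> = (\<Sum>k\<le>2 * M. of_real (real (2 * M choose k) / 4 ^ M) * e2pi ((real k - real M) * t))"
    by (simp add: e2pi_power algebra_simps flip: e2pi_add)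
  finally show ?thesis .
qed

definition binomial_weight :: "nat \<Rightarrow> ('n::finite \<Rightarrow> nat) \<Rightarrow> real" where
  "binomial_weight M j = (\<Prod>i\<in>UNIV. real (2 * M choose j i) / 4 ^ M)"

definition centred :: "nat \<Rightarrow> ('n \<Rightarrow> nat) \<Rightarrow> ('n \<Rightarrow> int)" where
  "centred M j = (\<lambda>i. int (j i) - int M)"

lemma binomial_weight_nonneg: "0 \<le> binomial_weight M j"
  by (simp add: binomial_weight_def prod_nonneg)

lemma abs_centred_le:
  assumes "j \<in> PiE UNIV (\<lambda>_. {..2 * M})"
  shows "\<bar>centred M j i\<bar> \<le> int M"
proof -
  have "j i \<le> 2 * M"
    using assms by (auto simp: PiE_iff)
  then show ?thesis
    unfolding centred_def abs_le_iff by linarith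
qed

lemma prod_raised_cosine_power_expansion:
  "complex_of_real (\<Prod>i\<in>UNIV. raised_cosine (y $ i) ^ M) =
     (\<Sum>j\<in>PiE UNIV (\<lambda>_. {..2 * M}). of_real (binomial_weight M j) * e2pi (pairing (centred M j) y))"
proof -
  have "complex_of_real (\<Prod>i\<in>UNIV. raised_cosine (y $ i) ^ M) =
      (\<Prod>i\<in>UNIV. \<Sum>k\<le>2 * M. of_real (real (2 * M choose k) / 4 ^ M) * e2pi ((real k - real M) * y $ i))"
    by (simp only: of_real_prod raised_cosine_power_expansion)
  also have "\<dots> = (\<Sum>j\<in>PiE UNIV (\<lambda>_. {..2 * M}).
      \<Prod>i\<in>UNIV. of_real (real (2 * M choose j i) / 4 ^ M) * e2pi ((real (j i) - real M) * y $ i))"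
    by (rule prod_sum_PiE) auto
  also have "\<dots> = (\<Sum>j\<in>PiE UNIV (\<lambda>_. {..2 * M}). of_real (binomial_weight M j) * e2pi (pairing (centred M j) y))"
    by (intro sum.cong refl)
      (simp add: prod.distrib binomial_weight_def centred_def pairing_def e2pi_sum del: of_real_divide)
  finally show ?thesis .
qed

text \<open>Averaging the expansion over \<open>G\<close> kills the characters not trivial on \<open>G\<close>; the hypothesis
  makes the surviving ones trivial at \<open>p\<close>, so that only nonnegative terms remain.\<close>

lemma sum_prod_raised_cosine_subgroup:
  fixes p :: "real^'n::finite"
  assumes G: "tsubgroup G" "finite G"
    and integral: "\<And>a. (\<forall>i. \<bar>a i\<bar> \<le> int M) \<Longrightarrow> (\<forall>g\<in>G. pairing a g \<in> \<int>) \<Longrightarrow> pairing a p \<in> \<int>"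
  shows "(\<Sum>g\<in>G. \<Prod>i\<in>UNIV. raised_cosine ((g - p) $ i) ^ M) =
           (\<Sum>j\<in>PiE UNIV (\<lambda>_. {..2 * M}). binomial_weight M j *
              (if \<forall>g\<in>G. pairing (centred M j) g \<in> \<int> then real (card G) else 0))"
    (is "_ = (\<Sum>j\<in>?J. ?w j * ?mass j)")
proof -
  have "complex_of_real (\<Sum>g\<in>G. \<Prod>i\<in>UNIV. raised_cosine ((g - p) $ i) ^ M) =
      (\<Sum>g\<in>G. \<Sum>j\<in>?J. of_real (?w j) * e2pi (pairing (centred M j) (g - p)))"
    by (simp only: of_real_sum prod_raised_cosine_power_expansion)
  also have "\<dots> = (\<Sum>j\<in>?J. of_real (?w j) * (\<Sum>g\<in>G. e2pi (pairing (centred M j) (g - p))))"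
    by (simp add: sum.swap[of _ G] sum_distrib_left)
  also have "\<dots> = (\<Sum>j\<in>?J. of_real (?w j * ?mass j))"
  proof (intro sum.cong refl)
    fix j assume "j \<in> ?J"
    then have bounded: "\<forall>i. \<bar>centred M j i\<bar> \<le> int M"
      by (simp add: abs_centred_le)
    have "e2pi (- pairing (centred M j) p) = 1" if "\<forall>g\<in>G. pairing (centred M j) g \<in> \<int>"
      using integral[OF bounded that] by (simp add: e2pi_eq_1_iff)
    then show "of_real (?w j) * (\<Sum>g\<in>G. e2pi (pairing (centred M j) (g - p))) = of_real (?w j * ?mass j)"
      by (simp add: sum_e2pi_pairing_subgroup_translate[OF G])
  qed
  also have "\<dots> = complex_of_real (\<Sum>j\<in>?J. ?w j * ?mass j)"
    by simp
  finally show ?thesis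
    by (simp only: of_real_eq_iff)
qed

lemma sum_prod_raised_cosine_lower_bound:
  fixes p :: "real^'n::finite"
  assumes "tsubgroup G" "finite G"
    and "\<And>a. (\<forall>i. \<bar>a i\<bar> \<le> int M) \<Longrightarrow> (\<forall>g\<in>G. pairing a g \<in> \<int>) \<Longrightarrow> pairing a p \<in> \<int>"
  shows "real (card G) * (real (2 * M choose M) / 4 ^ M) ^ CARD('n)
           \<le> (\<Sum>g\<in>G. \<Prod>i\<in>UNIV. raised_cosine ((g - p) $ i) ^ M)"
proof -
  define centre where "centre = (\<lambda>_::'n. M)"
  have "centre \<in> PiE UNIV (\<lambda>_. {..2 * M})" "centred M centre = 0"
    by (auto simp: centre_def centred_def)
  then have "real (card G) * (real (2 * M choose M) / 4 ^ M) ^ CARD('n) =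
      binomial_weight M centre *
        (if \<forall>g\<in>G. pairing (centred M centre) g \<in> \<int> then real (card G) else 0)"
    by (simp add: binomial_weight_def centre_def)
  also have "\<dots> \<le> (\<Sum>j\<in>PiE UNIV (\<lambda>_. {..2 * M}). binomial_weight M j *
              (if \<forall>g\<in>G. pairing (centred M j) g \<in> \<int> then real (card G) else 0))"
    using \<open>centre \<in> PiE UNIV (\<lambda>_. {..2 * M})\<close>
    by (intro member_le_sum) (auto simp: binomial_weight_nonneg finite_PiE)
  also have "\<dots> = (\<Sum>g\<in>G. \<Prod>i\<in>UNIV. raised_cosine ((g - p) $ i) ^ M)"
    by (rule sum_prod_raised_cosine_subgroup[OF assms, symmetric])
  finally show ?thesis .
qed

lemma prod_le_factor:
  assumes "finite A" "i \<in> A" "\<And>j. j \<in> A \<Longrightarrow> 0 \<le> f j \<and> f j \<le> (1::real)"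
  shows "prod f A \<le> f i"
proof -
  have "prod f A = f i * prod f (A - {i})"
    using assms(1,2) by (rule prod.remove)
  also have "\<dots> \<le> f i * 1"
    using assms by (intro mult_left_mono prod_le_1) auto
  finally show ?thesis
    by simp
qed

lemma sum_prod_raised_cosine_upper_bound:
  assumes "\<forall>g\<in>G. \<exists>i. raised_cosine (g $ i - p $ i) \<le> \<eta>" "0 \<le> \<eta>"
  shows "(\<Sum>g\<in>G. \<Prod>i\<in>UNIV. raised_cosine ((g - p) $ i) ^ M) \<le> real (card G) * \<eta> ^ M"
proof -
  have "(\<Prod>i\<in>UNIV. raised_cosine ((g - p) $ i) ^ M) \<le> \<eta> ^ M" if "g \<in> G" for g
  proof -
    obtain i where i: "raised_cosine (g $ i - p $ i) \<le> \<eta>"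
      using assms(1) \<open>g \<in> G\<close> by blast
    have "(\<Prod>i\<in>UNIV. raised_cosine ((g - p) $ i) ^ M) \<le> raised_cosine ((g - p) $ i) ^ M"
      by (rule prod_le_factor) (auto simp: raised_cosine_nonneg raised_cosine_le_1 power_le_one)
    also have "\<dots> \<le> \<eta> ^ M"
      using i by (intro power_mono) (auto simp: raised_cosine_nonneg)
    finally show ?thesis .
  qed
  then have "(\<Sum>g\<in>G. \<Prod>i\<in>UNIV. raised_cosine ((g - p) $ i) ^ M) \<le> (\<Sum>g\<in>G. \<eta> ^ M)"
    by (rule sum_mono)
  then show ?thesis
    by simp
qed

text \<open>If a finite subgroup \<open>G\<close> stays away from a point \<open>p\<close>, some character of bounded degree is
  trivial on \<open>G\<close> but not at \<open>p\<close>: otherwise the average over \<open>G\<close> of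
  \<open>\<Prod>\<^sub>i raised_cosine (x\<^sub>i - p\<^sub>i) ^ M\<close> would be at least its constant coefficient
  \<open>\<ge> (2 M)\<^sup>-\<^sup>n\<close>, whereas each of its terms is at most \<open>\<eta>\<^sup>M\<close>.\<close>

lemma bounded_character_separates:
  assumes "\<eta> < 1"
  obtains M where "\<And>p G. tsubgroup G \<Longrightarrow> finite G \<Longrightarrow> (\<forall>g\<in>G. \<exists>i. raised_cosine (g $ i - p $ i) \<le> \<eta>) \<Longrightarrow>
      \<exists>a::'n::finite \<Rightarrow> int. (\<forall>i. \<bar>a i\<bar> \<le> int M) \<and> (\<forall>g\<in>G. pairing a g \<in> \<int>) \<and> pairing a p \<notin> \<int>"
proof -
  define \<eta>' where "\<eta>' = max \<eta> (1/2)"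
  have \<eta>': "0 < \<eta>'" "\<eta>' < 1" "\<eta> \<le> \<eta>'"
    using assms by (auto simp: \<eta>'_def)
  have "(\<lambda>M. (2 * real M) ^ CARD('n) * \<eta>' ^ M) \<longlonglongrightarrow> 0"
    using \<eta>' by real_asymp
  then have "eventually (\<lambda>M. (2 * real M) ^ CARD('n) * \<eta>' ^ M < 1 \<and> 0 < M) sequentially"
    by (intro eventually_conj order_tendstoD(2) eventually_gt_at_top) auto
  then obtain M where M: "(2 * real M) ^ CARD('n) * \<eta>' ^ M < 1" "0 < M"
    by (auto dest: eventually_happens)
  show thesis
  proof (rule that, rule ccontr)
    fix p :: "real^'n" and G
    assume G: "tsubgroup G" "finite G" and far: "\<forall>g\<in>G. \<exists>i. raised_cosine (g $ i - p $ i) \<le> \<eta>"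
      and "\<nexists>a. (\<forall>i. \<bar>a i\<bar> \<le> int M) \<and> (\<forall>g\<in>G. pairing a g \<in> \<int>) \<and> pairing a p \<notin> \<int>"
    then have integral: "\<And>a. (\<forall>i. \<bar>a i\<bar> \<le> int M) \<Longrightarrow> (\<forall>g\<in>G. pairing a g \<in> \<int>) \<Longrightarrow> pairing a p \<in> \<int>"
      by blast
    have far': "\<forall>g\<in>G. \<exists>i. raised_cosine (g $ i - p $ i) \<le> \<eta>'"
      using far \<eta>'(3) order_trans by blast
    have "0 \<in> G"
      using G(1) by (simp add: tsubgroup_def)
    then have card_pos: "0 < real (card G)"
      using G(2) card_gt_0_iff by auto
    have "1 / (2 * real M) \<le> real (2 * M choose M) / 4 ^ M"
      using central_binomial_lower_bound[OF M(2)] by (simp add: field_simps)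
    then have "real (card G) * (1 / (2 * real M)) ^ CARD('n)
                 \<le> real (card G) * (real (2 * M choose M) / 4 ^ M) ^ CARD('n)"
      using M(2) by (intro mult_left_mono power_mono) auto
    also have "\<dots> \<le> (\<Sum>g\<in>G. \<Prod>i\<in>UNIV. raised_cosine ((g - p) $ i) ^ M)"
      by (rule sum_prod_raised_cosine_lower_bound[OF G integral])
    also have "\<dots> \<le> real (card G) * \<eta>' ^ M"
      using far' \<eta>'(1) by (intro sum_prod_raised_cosine_upper_bound) auto
    finally have "1 \<le> (2 * real M) ^ CARD('n) * \<eta>' ^ M"
      using card_pos M(2) by (simp add: power_divide field_simps)
    then show False
      using M(1) by simp
  qed
qed

section \<open>Combining series\<close>

lemma zero_in_taxis: "0 \<in> taxis i"
proof -
  have "0 = tproj (0 *\<^sub>R axis i (1::real))"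
    by (simp add: tproj_def vec_eq_iff)
  then show ?thesis
    unfolding taxis_def by blast
qed

lemma qf_toric_Int:
  assumes "qf_toric G" "tsubgroup H"
  shows "qf_toric (G \<inter> H)"
  using assms zero_in_taxis by (auto simp: qf_toric_def tsubgroup_def)

definition classifies :: "(real^'n \<Rightarrow> bool) \<Rightarrow> (real^'n) set \<Rightarrow> ('n::finite) tseries set \<Rightarrow> bool" where
  "classifies bad V Ss \<longleftrightarrow> finite Ss \<and> (\<forall>S\<in>Ss. is_series S \<and> fst S \<subseteq> V) \<and>
     (\<forall>G. qf_toric G \<and> G \<subseteq> V \<longrightarrow> ((\<forall>g\<in>G. \<not> bad g) \<longleftrightarrow> (\<exists>S\<in>Ss. belongs G S)))"

lemma classifies_UN:
  assumes "finite K" "\<And>k. k \<in> K \<Longrightarrow> classifies bad (W k) (Ss k)" "\<And>k. k \<in> K \<Longrightarrow> W k \<subseteq> V"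
    and "\<And>G. qf_toric G \<Longrightarrow> G \<subseteq> V \<Longrightarrow> \<forall>g\<in>G. \<not> bad g \<Longrightarrow> \<exists>k\<in>K. G \<subseteq> W k"
  shows "classifies bad V (\<Union>k\<in>K. Ss k)"
  unfolding classifies_def
proof (intro conjI allI impI ballI)
  show "finite (\<Union>k\<in>K. Ss k)"
    using assms(1,2) by (auto simp: classifies_def)
next
  fix S assume "S \<in> (\<Union>k\<in>K. Ss k)"
  then obtain k where k: "k \<in> K" "S \<in> Ss k"
    by auto
  then show "is_series S" "fst S \<subseteq> V"
    using assms(2)[OF k(1)] assms(3)[OF k(1)] by (auto simp: classifies_def)
next
  fix G assume G: "qf_toric G \<and> G \<subseteq> V"
  show "(\<forall>g\<in>G. \<not> bad g) \<longleftrightarrow> (\<exists>S\<in>\<Union>k\<in>K. Ss k. belongs G S)"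
  proof
    assume good: "\<forall>g\<in>G. \<not> bad g"
    then obtain k where k: "k \<in> K" "G \<subseteq> W k"
      using assms(4) G by blast
    then show "\<exists>S\<in>\<Union>k\<in>K. Ss k. belongs G S"
      using assms(2)[OF k(1)] G good by (auto simp: classifies_def)
  next
    assume "\<exists>S\<in>\<Union>k\<in>K. Ss k. belongs G S"
    then obtain k S where k: "k \<in> K" "S \<in> Ss k" "belongs G S"
      by auto
    have "fst S \<subseteq> W k"
      using assms(2)[OF k(1)] k(2) by (simp add: classifies_def)
    then have "G \<subseteq> W k"
      using k(3) by (auto simp: belongs_def)
    then show "\<forall>g\<in>G. \<not> bad g"
      using assms(2)[OF k(1)] k G by (auto simp: classifies_def)
  qed
qed

text \<open>The condition \<open>G \<inter> W \<subseteq> fst S'\<close> is omitted when \<open>fst S' = W\<close>: there it is void, but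
  stating it would violate the properness \<open>V\<^sub>i\<^sub>j \<subset> V\<^sub>i\<close> required of a series.\<close>

definition conditions_within ::
    "(real^'n) set \<Rightarrow> ('n::finite) tseries \<Rightarrow> ((real^'n) set \<times> (real^'n) set list) list"
  where
  "conditions_within W S' = (if fst S' = W then [] else [(W, [fst S'])]) @ snd S'"

definition meet_series ::
    "(real^'n) set \<Rightarrow> 'i list \<Rightarrow> ('i \<Rightarrow> (real^'n) set) \<Rightarrow> ('i \<Rightarrow> ('n::finite) tseries) \<Rightarrow> 'n tseries"
  where
  "meet_series V xs W f = (V, concat (map (\<lambda>i. conditions_within (W i) (f i)) xs))"

lemma is_series_psubset: "is_series S \<Longrightarrow> (U, Us) \<in> set (snd S) \<Longrightarrow> U \<subset> fst S"
  by (auto simp: is_series_def)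

lemma conditions_within_iff:
  assumes "is_series S'" "fst S' \<subseteq> W"
  shows "(\<forall>(U, Us) \<in> set (conditions_within W S'). G \<inter> U \<subseteq> \<Union> (set Us)) \<longleftrightarrow>
         G \<inter> W \<subseteq> fst S' \<and> (\<forall>(U, Us) \<in> set (snd S'). (G \<inter> W) \<inter> U \<subseteq> \<Union> (set Us))"
proof -
  have "(\<forall>(U, Us) \<in> set (snd S'). (G \<inter> W) \<inter> U \<subseteq> \<Union> (set Us)) \<longleftrightarrow>
        (\<forall>(U, Us) \<in> set (snd S'). G \<inter> U \<subseteq> \<Union> (set Us))"
  proof (intro ball_cong refl)
    fix p assume p: "p \<in> set (snd S')"
    obtain U Us where p_eq: "p = (U, Us)"
      by fastforce
    have "G \<inter> W \<inter> U = G \<inter> U"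
      using is_series_psubset[OF assms(1) p[unfolded p_eq]] assms(2) by blast
    then show "(case p of (U, Us) \<Rightarrow> G \<inter> W \<inter> U \<subseteq> \<Union> (set Us)) \<longleftrightarrow>
               (case p of (U, Us) \<Rightarrow> G \<inter> U \<subseteq> \<Union> (set Us))"
      unfolding p_eq by simp
  qed
  then show ?thesis
    by (cases "fst S' = W") (auto simp: conditions_within_def)
qed

lemma belongs_meet_series:
  assumes "\<And>i. i \<in> set xs \<Longrightarrow> is_series (f i) \<and> fst (f i) \<subseteq> W i \<and> tsubgroup (W i)"
    and "qf_toric G" "G \<subseteq> V"
  shows "belongs G (meet_series V xs W f) \<longleftrightarrow> (\<forall>i\<in>set xs. belongs (G \<inter> W i) (f i))"
proof -
  have "belongs G (meet_series V xs W f) \<longleftrightarrow>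
      (\<forall>i\<in>set xs. \<forall>(U, Us) \<in> set (conditions_within (W i) (f i)). G \<inter> U \<subseteq> \<Union> (set Us))"
    using assms(2,3) unfolding belongs_def meet_series_def by auto
  also have "\<dots> \<longleftrightarrow> (\<forall>i\<in>set xs. belongs (G \<inter> W i) (f i))"
  proof (intro ball_cong refl)
    fix i assume i: "i \<in> set xs"
    have "qf_toric (G \<inter> W i)"
      using qf_toric_Int assms(1)[OF i] assms(2) by blast
    then show "(\<forall>(U, Us) \<in> set (conditions_within (W i) (f i)). G \<inter> U \<subseteq> \<Union> (set Us)) \<longleftrightarrow>
               belongs (G \<inter> W i) (f i)"
      using conditions_within_iff[of "f i" "W i" G] assms(1)[OF i] unfolding belongs_def by auto
  qed
  finally show ?thesis .
qed

lemma is_series_meet_series: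
  assumes "closed_tsubgroup V"
    and "\<And>i. i \<in> set xs \<Longrightarrow> is_series (f i) \<and> fst (f i) \<subseteq> W i \<and> closed_tsubgroup (W i) \<and> W i \<subset> V"
  shows "is_series (meet_series V xs W f)"
  unfolding is_series_def meet_series_def fst_conv snd_conv
proof (intro conjI ballI)
  show "closed_tsubgroup V"
    by fact
  fix p assume "p \<in> set (concat (map (\<lambda>i. conditions_within (W i) (f i)) xs))"
  then obtain i where i: "i \<in> set xs" and p: "p \<in> set (conditions_within (W i) (f i))"
    by auto
  note f_i = assms(2)[OF i]
  obtain U Us where p_eq: "p = (U, Us)"
    by fastforce
  show "case p of (U, Us) \<Rightarrow> closed_tsubgroup U \<and> U \<subset> V \<and> (\<forall>U'\<in>set Us. closed_tsubgroup U' \<and> U' \<subset> U)"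
  proof (cases "p \<in> set (snd (f i))")
    case True
    then have "(U, Us) \<in> set (snd (f i))"
      using p_eq by simp
    then have "closed_tsubgroup U" "U \<subset> fst (f i)" "\<forall>U'\<in>set Us. closed_tsubgroup U' \<and> U' \<subset> U"
      using f_i unfolding is_series_def by fastforce+
    moreover have "U \<subset> V"
      using calculation(2) f_i by blast
    ultimately show ?thesis
      unfolding p_eq by simp
  next
    case False
    then have "fst (f i) \<noteq> W i" "U = W i" "Us = [fst (f i)]"
      using p p_eq by (auto simp: conditions_within_def split: if_splits)
    then show ?thesis
      using f_i unfolding is_series_def p_eq by auto
  qed
qed

lemma classifies_meet:
  assumes "closed_tsubgroup V" "finite I"
    and "\<And>i. i \<in> I \<Longrightarrow> closed_tsubgroup (W i) \<and> W i \<subset> V"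
    and "\<And>i. i \<in> I \<Longrightarrow> classifies bad (W i) (Ss i)"
    and "\<And>G. qf_toric G \<Longrightarrow> G \<subseteq> V \<Longrightarrow> (\<forall>g\<in>G. \<not> bad g) \<longleftrightarrow> (\<forall>i\<in>I. \<forall>g\<in>G \<inter> W i. \<not> bad g)"
    and "set xs = I"
  shows "classifies bad V (meet_series V xs W ` PiE I Ss)"
proof -
  have chosen: "is_series (f i) \<and> fst (f i) \<subseteq> W i \<and> closed_tsubgroup (W i) \<and> W i \<subset> V \<and> tsubgroup (W i)"
    if "f \<in> PiE I Ss" "i \<in> I" for f i
    using that assms(3,4)[OF that(2)] by (auto simp: classifies_def closed_tsubgroup_def)
  show ?thesis
    unfolding classifies_def
  proof (intro conjI allI impI ballI)
  show "finite (meet_series V xs W ` PiE I Ss)"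
    using assms(2,4) by (auto intro!: finite_PiE simp: classifies_def)
  fix S assume "S \<in> meet_series V xs W ` PiE I Ss"
  then obtain f where f: "f \<in> PiE I Ss" "S = meet_series V xs W f"
    by auto
  show "is_series S"
    unfolding f(2) using chosen f(1) assms(6) by (intro is_series_meet_series[OF assms(1)]) blast
  show "fst S \<subseteq> V"
    using f by (simp add: meet_series_def)
next
  fix G assume G: "qf_toric G \<and> G \<subseteq> V"
  have "(\<forall>g\<in>G. \<not> bad g) \<longleftrightarrow> (\<forall>i\<in>I. \<forall>g\<in>G \<inter> W i. \<not> bad g)"
    using assms(5) G by blast
  also have "\<dots> \<longleftrightarrow> (\<forall>i\<in>I. \<exists>S\<in>Ss i. belongs (G \<inter> W i) S)"
  proof (intro ball_cong refl)
    fix i assume i: "i \<in> I"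
    have "qf_toric (G \<inter> W i)"
      using qf_toric_Int G assms(3)[OF i] by (auto simp: closed_tsubgroup_def)
    then show "(\<forall>g\<in>G \<inter> W i. \<not> bad g) \<longleftrightarrow> (\<exists>S\<in>Ss i. belongs (G \<inter> W i) S)"
      using assms(4)[OF i] by (auto simp: classifies_def)
  qed
  also have "\<dots> \<longleftrightarrow> (\<exists>f\<in>PiE I Ss. \<forall>i\<in>I. belongs (G \<inter> W i) (f i))"
  proof
    assume "\<forall>i\<in>I. \<exists>S\<in>Ss i. belongs (G \<inter> W i) S"
    then obtain f where "\<forall>i\<in>I. f i \<in> Ss i \<and> belongs (G \<inter> W i) (f i)"
      by metis
    then show "\<exists>f\<in>PiE I Ss. \<forall>i\<in>I. belongs (G \<inter> W i) (f i)"
      by (intro bexI[of _ "restrict f I"]) auto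
  qed auto
  also have "\<dots> \<longleftrightarrow> (\<exists>S\<in>meet_series V xs W ` PiE I Ss. belongs G S)"
  proof -
    have "belongs G (meet_series V xs W f) \<longleftrightarrow> (\<forall>i\<in>I. belongs (G \<inter> W i) (f i))" if "f \<in> PiE I Ss" for f
      using belongs_meet_series[of xs f W G V] chosen[OF that] assms(6) G by auto
    then show ?thesis
      by auto
  qed
  finally show "(\<forall>g\<in>G. \<not> bad g) \<longleftrightarrow> (\<exists>S\<in>meet_series V xs W ` PiE I Ss. belongs G S)" .
  qed
qed

section \<open>The induction\<close>

definition active_coords :: "(real^'n) set \<Rightarrow> 'n set" where
  "active_coords V = {i. \<exists>y\<in>V. y $ i \<noteq> 0}"

definition bad_in_sections :: "(real^'n \<Rightarrow> bool) \<Rightarrow> (real^'n) set \<Rightarrow> bool" where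
  "bad_in_sections bad V \<longleftrightarrow> (\<forall>x\<in>V. bad x \<longrightarrow> (\<exists>i\<in>active_coords V. x $ i = 0))"

definition bad_near_point :: "(real^'n \<Rightarrow> bool) \<Rightarrow> (real^'n) set \<Rightarrow> bool" where
  "bad_near_point bad V \<longleftrightarrow> (\<exists>p\<in>V. \<exists>\<eta><1. \<forall>x\<in>V. (\<forall>i. \<eta> < raised_cosine (x $ i - p $ i)) \<longrightarrow> bad x)"

lemma perp_insert_coordinate:
  "perp (insert (\<lambda>k. if k = i then 1 else 0) S) = {x \<in> perp S. x $ i = 0}"
proof -
  have "x $ i \<in> \<int> \<longleftrightarrow> x $ i = 0" if "x \<in> perp S" for x
    using that perp_subset_torus torus_nth_Ints_iff by blast
  then show ?thesis
    by (auto simp: perp_insert pairing_coordinate)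
qed

lemma finite_int_box: "finite {a :: 'n::finite \<Rightarrow> int. \<forall>i. \<bar>a i\<bar> \<le> int M}"
proof (rule finite_subset)
  show "{a :: 'n \<Rightarrow> int. \<forall>i. \<bar>a i\<bar> \<le> int M} \<subseteq> PiE UNIV (\<lambda>_. {- int M..int M})"
  proof
    fix a :: "'n \<Rightarrow> int" assume "a \<in> {a. \<forall>i. \<bar>a i\<bar> \<le> int M}"
    then have bound: "\<bar>a i\<bar> \<le> int M" for i
      by blast
    have "a i \<in> {- int M..int M}" for i
      using bound[of i] by (simp add: abs_le_iff)
    then show "a \<in> PiE UNIV (\<lambda>_. {- int M..int M})"
      by (simp add: PiE_UNIV_domain)
  qed
  show "finite (PiE (UNIV :: 'n set) (\<lambda>_. {- int M..int M}))"
    by (intro finite_PiE) auto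
qed

lemma classifies_by_sections:
  fixes S :: "('n::finite \<Rightarrow> int) set"
  assumes "bad_in_sections bad (perp S)"
    and IH: "\<And>a. perp (insert a S) \<subset> perp S \<Longrightarrow> \<exists>Ss. classifies bad (perp (insert a S)) Ss"
  shows "\<exists>Ss. classifies bad (perp S) Ss"
proof -
  define I where "I = active_coords (perp S)"
  define W where "W i = {x \<in> perp S. x $ i = 0}" for i
  have W_perp: "W i = perp (insert (\<lambda>k. if k = i then 1 else 0) S)" for i
    by (simp add: W_def perp_insert_coordinate)
  have W: "closed_tsubgroup (W i) \<and> W i \<subset> perp S" if i: "i \<in> I" for i
  proof -
    obtain y where "y \<in> perp S" "y $ i \<noteq> 0"
      using i unfolding I_def active_coords_def by blast
    then have "W i \<subset> perp S"
      unfolding W_def by auto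
    then show ?thesis
      by (simp add: W_perp closed_tsubgroup_perp)
  qed
  have "\<exists>Ss. classifies bad (W i) Ss" if "i \<in> I" for i
    using W[OF that] IH unfolding W_perp by blast
  then have "\<forall>i\<in>I. \<exists>Ss. classifies bad (W i) Ss"
    by blast
  from bchoice[OF this] obtain Ss where Ss: "\<forall>i\<in>I. classifies bad (W i) (Ss i)" ..
  have sections: "(\<forall>g\<in>G. \<not> bad g) \<longleftrightarrow> (\<forall>i\<in>I. \<forall>g\<in>G \<inter> W i. \<not> bad g)"
    if "G \<subseteq> perp S" for G
    using assms(1) that unfolding bad_in_sections_def I_def W_def by blast
  obtain xs where "set xs = I"
    using finite_list[of I] by auto
  have "classifies bad (perp S) (meet_series (perp S) xs W ` PiE I Ss)"
    by (rule classifies_meet[OF closed_tsubgroup_perp finite W _ _ \<open>set xs = I\<close>])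
      (use Ss sections in blast)+
  then show ?thesis
    by blast
qed

lemma classifies_near_point:
  fixes S :: "('n::finite \<Rightarrow> int) set"
  assumes "bad_near_point bad (perp S)"
    and IH: "\<And>a. perp (insert a S) \<subset> perp S \<Longrightarrow> \<exists>Ss. classifies bad (perp (insert a S)) Ss"
  shows "\<exists>Ss. classifies bad (perp S) Ss"
proof -
  obtain p \<eta> where p: "p \<in> perp S" "\<eta> < 1"
    and near: "\<forall>x\<in>perp S. (\<forall>i. \<eta> < raised_cosine (x $ i - p $ i)) \<longrightarrow> bad x"
    using assms(1) by (auto simp: bad_near_point_def)
  obtain M where M: "\<And>p G. tsubgroup G \<Longrightarrow> finite G \<Longrightarrow> (\<forall>g\<in>G. \<exists>i. raised_cosine (g $ i - p $ i) \<le> \<eta>) \<Longrightarrow>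
      \<exists>a::'n \<Rightarrow> int. (\<forall>i. \<bar>a i\<bar> \<le> int M) \<and> (\<forall>g\<in>G. pairing a g \<in> \<int>) \<and> pairing a p \<notin> \<int>"
    using bounded_character_separates[OF p(2)] by blast
  define K where "K = {a :: 'n \<Rightarrow> int. (\<forall>i. \<bar>a i\<bar> \<le> int M) \<and> pairing a p \<notin> \<int>}"
  have "finite K"
    unfolding K_def by (rule finite_subset[OF _ finite_int_box]) auto
  have proper: "perp (insert a S) \<subset> perp S" if "a \<in> K" for a
    using that p(1) by (auto simp: K_def perp_insert)
  then have "\<forall>a\<in>K. \<exists>Ss. classifies bad (perp (insert a S)) Ss"
    using IH by blast
  from bchoice[OF this] obtain Ss where Ss: "\<forall>a\<in>K. classifies bad (perp (insert a S)) (Ss a)" ..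
  have cover: "\<exists>a\<in>K. G \<subseteq> perp (insert a S)"
    if G: "qf_toric G" "G \<subseteq> perp S" "\<forall>g\<in>G. \<not> bad g" for G
  proof -
    have "\<forall>g\<in>G. \<exists>i. raised_cosine (g $ i - p $ i) \<le> \<eta>"
    proof (intro ballI)
      fix g assume "g \<in> G"
      then have "\<not> (\<forall>i. \<eta> < raised_cosine (g $ i - p $ i))"
        using G near by blast
      then show "\<exists>i. raised_cosine (g $ i - p $ i) \<le> \<eta>"
        by (simp add: not_less)
    qed
    then obtain a where a: "\<forall>i. \<bar>a i\<bar> \<le> int M" "\<forall>g\<in>G. pairing a g \<in> \<int>" "pairing a p \<notin> \<int>"
      using M[of G p] G(1) by (auto simp: qf_toric_def)
    then have "a \<in> K" "G \<subseteq> perp (insert a S)"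
      using G(2) by (auto simp: K_def perp_insert)
    then show ?thesis
      by blast
  qed
  have "classifies bad (perp S) (\<Union>a\<in>K. Ss a)"
    by (rule classifies_UN[OF \<open>finite K\<close>]) (use Ss proper cover in blast)+
  then show ?thesis
    by blast
qed

lemma classifies_perp:
  assumes "\<And>S. bad_in_sections bad (perp S) \<or> bad_near_point bad (perp S)"
  shows "\<exists>Ss. classifies bad (perp S :: (real^'n::finite) set) Ss"
  using wf_perp_psubset
proof (induction S rule: wf_induct_rule)
  case (less S)
  then have IH: "\<And>a. perp (insert a S) \<subset> perp S \<Longrightarrow> \<exists>Ss. classifies bad (perp (insert a S)) Ss"
    by blast
  from assms[of S] show ?case
  proof
    assume "bad_in_sections bad (perp S)"
    then show ?case
      using IH by (rule classifies_by_sections)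
  next
    assume "bad_near_point bad (perp S)"
    then show ?case
      using IH by (rule classifies_near_point)
  qed
qed

section \<open>The dichotomy for minimal log discrepancies\<close>

lemma raised_cosine_lt_1:
  assumes "0 < \<delta>" "\<delta> < 1/2"
  shows "raised_cosine \<delta> < 1"
proof -
  have "cos (2 * pi * \<delta>) < cos 0"
    using assms by (intro cos_monotone_0_pi) auto
  then show ?thesis
    by (simp add: raised_cosine_def)
qed

lemma raised_cosine_gt_imp_close:
  assumes "0 < \<delta>" "\<delta> < c" "c < 1 - \<delta>" "0 \<le> x" "x < 1"
    and "raised_cosine \<delta> < raised_cosine (x - c)"
  shows "\<bar>x - c\<bar> < \<delta>"
proof -
  define t where "t = x - c"
  define u where "u = \<bar>t\<bar>"
  have u: "0 \<le> u" "u < 1 - \<delta>"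
    using assms(2-5) by (auto simp: u_def t_def)
  have "cos (2 * pi * t) = cos (2 * pi * u)"
    by (cases "t \<ge> 0") (auto simp: u_def)
  then have less: "cos (2 * pi * \<delta>) < cos (2 * pi * u)"
    using assms(6) by (simp add: raised_cosine_def t_def)
  show ?thesis
  proof (cases "u \<le> 1/2")
    case True
    then have "2 * pi * u < 2 * pi * \<delta>"
      using less u assms(1-3) by (subst (asm) cos_mono_less_eq) auto
    then show ?thesis
      by (simp add: u_def t_def)
  next
    case False
    have "cos (2 * pi * u) = cos (2 * pi - 2 * pi * (1 - u))"
      by (simp add: algebra_simps)
    also have "\<dots> = cos (2 * pi * (1 - u))"
      by (rule cos_2pi_minus)
    finally have "cos (2 * pi * \<delta>) < cos (2 * pi * (1 - u))"
      using less by simp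
    then have "2 * pi * (1 - u) < 2 * pi * \<delta>"
      using False u assms(1-3) by (subst (asm) cos_mono_less_eq) auto
    then show ?thesis
      using u by simp
  qed
qed

lemma not_active_coord: "x \<in> V \<Longrightarrow> i \<notin> active_coords V \<Longrightarrow> x $ i = 0"
  by (auto simp: active_coords_def)

lemma bad_near_point_of_box:
  assumes V: "V \<subseteq> torus" "p \<in> V" and "0 < \<delta>" "active_coords V \<noteq> {}"
    and p: "\<forall>i\<in>active_coords V. \<delta> < p $ i \<and> p $ i < 1 - \<delta>"
    and box: "\<forall>x\<in>V. (\<forall>i. \<bar>x $ i - p $ i\<bar> < \<delta>) \<longrightarrow> bad x"
  shows "bad_near_point bad V"
  unfolding bad_near_point_def
proof (intro bexI[OF _ V(2)] exI[of _ "raised_cosine \<delta>"] conjI ballI impI)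
  show "raised_cosine \<delta> < 1"
    using assms(3,4) p by (intro raised_cosine_lt_1) fastforce+
  fix x assume x: "x \<in> V" and near: "\<forall>i. raised_cosine \<delta> < raised_cosine (x $ i - p $ i)"
  have "\<bar>x $ i - p $ i\<bar> < \<delta>" for i
  proof (cases "i \<in> active_coords V")
    case True
    then show ?thesis
      using p near torus_nth x V(1) assms(3) by (intro raised_cosine_gt_imp_close) blast+
  next
    case False
    then show ?thesis
      using not_active_coord[OF x False] not_active_coord[OF V(2) False] assms(3) by simp
  qed
  then show "bad x"
    using box x by blast
qed

lemma bad_near_point_of_sum_lt:
  assumes V: "V \<subseteq> torus" "p \<in> V" and "0 < d" "active_coords V \<noteq> {}"
    and p: "\<forall>i\<in>active_coords V. d < p $ i \<and> p $ i < 1 - d" "(\<Sum>i\<in>UNIV. p $ i) < \<epsilon>"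
    and bad: "\<And>x. x \<noteq> 0 \<Longrightarrow> (\<Sum>i\<in>UNIV. x $ i) < \<epsilon> \<Longrightarrow> bad x"
  shows "bad_near_point bad (V :: (real^'n::finite) set)"
proof -
  define \<delta> where "\<delta> = min d ((\<epsilon> - (\<Sum>i\<in>UNIV. p $ i)) / (real CARD('n) + 1))"
  have \<delta>: "0 < \<delta>" "\<delta> \<le> d"
    using assms(3) p(2) by (auto simp: \<delta>_def)
  show ?thesis
  proof (rule bad_near_point_of_box[OF V \<delta>(1) assms(4)])
    show "\<forall>i\<in>active_coords V. \<delta> < p $ i \<and> p $ i < 1 - \<delta>"
      using p(1) \<delta>(2) by fastforce
    show "\<forall>x\<in>V. (\<forall>i. \<bar>x $ i - p $ i\<bar> < \<delta>) \<longrightarrow> bad x"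
    proof (intro ballI impI)
      fix x assume "x \<in> V" and close: "\<forall>i. \<bar>x $ i - p $ i\<bar> < \<delta>"
      have "(\<Sum>i\<in>UNIV. x $ i) - (\<Sum>i\<in>UNIV. p $ i) \<le> (\<Sum>i\<in>UNIV. \<bar>x $ i - p $ i\<bar>)"
        by (simp add: sum_subtractf[symmetric] sum_mono)
      also have "\<dots> < (\<Sum>i\<in>(UNIV::'n set). \<delta>)"
        using close by (intro sum_strict_mono) auto
      also have "\<dots> = real CARD('n) * \<delta>"
        by simp
      also have "\<dots> \<le> real CARD('n) * ((\<epsilon> - (\<Sum>i\<in>UNIV. p $ i)) / (real CARD('n) + 1))"
        by (intro mult_left_mono) (auto simp: \<delta>_def)
      also have "\<dots> < \<epsilon> - (\<Sum>i\<in>UNIV. p $ i)"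
        using p(2) by (simp add: field_simps)
      finally have "(\<Sum>i\<in>UNIV. x $ i) < \<epsilon>"
        by simp
      moreover obtain i where "i \<in> active_coords V"
        using assms(4) by blast
      then have "d < p $ i"
        using p(1) by blast
      then have "0 < x $ i"
        using close[rule_format, of i] \<delta>(2) by (auto simp: abs_less_iff)
      then have "x $ i \<noteq> 0"
        by simp
      then have "x \<noteq> 0"
        by auto
      ultimately show "bad x"
        using bad by blast
    qed
  qed
qed

lemma interior_bad_point:
  assumes "\<not> bad_in_sections bad V" "V \<subseteq> torus" "\<And>x. bad x \<Longrightarrow> x \<noteq> 0"
  obtains b d where "b \<in> V" "bad b" "0 < d" "active_coords V \<noteq> {}"
    "\<forall>i\<in>active_coords V. d < b $ i \<and> b $ i < 1 - d"
proof -
  obtain b where b: "b \<in> V" "bad b" "\<forall>i\<in>active_coords V. b $ i \<noteq> 0"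
    using assms(1) unfolding bad_in_sections_def by blast
  define gap where "gap i = min (b $ i) (1 - b $ i)" for i
  define d where "d = Min (insert 1 (gap ` active_coords V)) / 2"
  have "0 < gap i" if "i \<in> active_coords V" for i
    using b(3) that torus_nth[OF subsetD[OF assms(2) b(1)], of i] by (auto simp: gap_def)
  then have "0 < Min (insert 1 (gap ` active_coords V))"
    by (subst Min_gr_iff) auto
  moreover have "Min (insert 1 (gap ` active_coords V)) \<le> gap i" if "i \<in> active_coords V" for i
    using that by (intro Min_le) auto
  ultimately have "0 < d" "\<forall>i\<in>active_coords V. d < b $ i \<and> b $ i < 1 - d"
    unfolding d_def gap_def by fastforce+
  moreover obtain i where "b $ i \<noteq> 0"
    using assms(3)[OF b(2)] by (auto simp: vec_eq_iff)
  then have "active_coords V \<noteq> {}"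
    using b(1) by (auto simp: active_coords_def)
  ultimately show thesis
    using that b(1,2) by blast
qed

definition nonzero_sum_le :: "real \<Rightarrow> real^'n::finite \<Rightarrow> bool" where
  "nonzero_sum_le \<epsilon> x \<longleftrightarrow> x \<noteq> 0 \<and> (\<Sum>i\<in>UNIV. x $ i) \<le> \<epsilon>"

definition nonzero_sum_lt :: "real \<Rightarrow> real^'n::finite \<Rightarrow> bool" where
  "nonzero_sum_lt \<epsilon> x \<longleftrightarrow> x \<noteq> 0 \<and> (\<Sum>i\<in>UNIV. x $ i) < \<epsilon>"

lemma sections_or_near_point_nonzero_sum_lt:
  "bad_in_sections (nonzero_sum_lt \<epsilon>) (perp S) \<or> bad_near_point (nonzero_sum_lt \<epsilon>) (perp S)"
proof (cases "bad_in_sections (nonzero_sum_lt \<epsilon>) (perp S)")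
  case False
  then obtain b d where "b \<in> perp S" "nonzero_sum_lt \<epsilon> b" "0 < d" "active_coords (perp S) \<noteq> {}"
    "\<forall>i\<in>active_coords (perp S). d < b $ i \<and> b $ i < 1 - d"
    using perp_subset_torus by (rule interior_bad_point) (simp add: nonzero_sum_lt_def)
  then have "bad_near_point (nonzero_sum_lt \<epsilon>) (perp S)"
    using perp_subset_torus
    by (intro bad_near_point_of_sum_lt[of _ b d \<epsilon>]) (auto simp: nonzero_sum_lt_def)
  then show ?thesis
    by (rule disjI2)
qed simp

lemma bad_near_point_of_reflection:
  assumes b: "b \<in> perp S" "0 < d" "active_coords (perp S) \<noteq> {}"
    and interior: "\<forall>i\<in>active_coords (perp S). d < b $ i \<and> b $ i < 1 - d"
    and x: "x \<in> perp S" "\<forall>i. \<bar>x $ i - b $ i\<bar> < d/2"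
    and sum: "2 * (\<Sum>i\<in>UNIV. b $ i) - (\<Sum>i\<in>UNIV. x $ i) < \<epsilon>"
    and bad: "\<And>y. y \<noteq> 0 \<Longrightarrow> (\<Sum>i\<in>UNIV. y $ i) < \<epsilon> \<Longrightarrow> bad y"
  shows "bad_near_point bad (perp S :: (real^'n::finite) set)"
proof -
  let ?A = "active_coords (perp S)"
  have near_b: "d < b $ i \<and> b $ i < 1 - d \<and> \<bar>x $ i - b $ i\<bar> < d/2" if "i \<in> ?A" for i
    using interior that x(2) by blast
  define p where "p = tproj (b + b - x)"
  have p_nth: "p $ i = 2 * b $ i - x $ i" for i
  proof (cases "i \<in> ?A")
    case True
    then have "0 \<le> b $ i + b $ i - x $ i" "b $ i + b $ i - x $ i < 1"
      using near_b[of i] unfolding abs_less_iff by linarith+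
    then show ?thesis
      by (simp add: p_def frac_eq)
  next
    case False
    then show ?thesis
      using not_active_coord[OF x(1) False] not_active_coord[OF b(1) False] by (simp add: p_def)
  qed
  have "(\<Sum>i\<in>UNIV. p $ i) = 2 * (\<Sum>i\<in>UNIV. b $ i) - (\<Sum>i\<in>UNIV. x $ i)"
    by (simp add: p_nth sum_subtractf sum_distrib_left)
  then have p_sum: "(\<Sum>i\<in>UNIV. p $ i) < \<epsilon>"
    using sum by simp
  have p_interior: "\<forall>i\<in>?A. d/2 < p $ i \<and> p $ i < 1 - d/2"
  proof
    fix i assume "i \<in> ?A"
    then show "d/2 < p $ i \<and> p $ i < 1 - d/2"
      using near_b[of i] unfolding p_nth abs_less_iff by linarith
  qed
  have "p \<in> perp S"
    unfolding p_def using b(1) x(1) by (rule tproj_reflect_in_perp)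
  moreover have "0 < d/2"
    using b(2) by simp
  ultimately show ?thesis
    by (rule bad_near_point_of_sum_lt[OF perp_subset_torus _ _ b(3) p_interior p_sum]) (rule bad)
qed

text \<open>A bad point \<open>b\<close> with coordinate sum exactly \<open>\<epsilon>\<close>: either all points of \<open>perp S\<close> near
  \<open>b\<close> have sum \<open>\<le> \<epsilon>\<close>, or one of them, \<open>x\<close>, has sum \<open>> \<epsilon>\<close> and its reflection
  \<open>2 b - x\<close> through \<open>b\<close> is a nearby point with sum \<open>< \<epsilon>\<close>.\<close>

lemma bad_near_point_nonzero_sum_le_of_sum_eq:
  assumes b: "b \<in> perp S" "0 < d" "active_coords (perp S) \<noteq> {}"
    and interior: "\<forall>i\<in>active_coords (perp S). d < b $ i \<and> b $ i < 1 - d"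
    and sum_b: "(\<Sum>i\<in>UNIV. b $ i) = \<epsilon>"
  shows "bad_near_point (nonzero_sum_le \<epsilon>) (perp S)"
proof (cases "\<forall>x\<in>perp S. (\<forall>i. \<bar>x $ i - b $ i\<bar> < d/2) \<longrightarrow> (\<Sum>i\<in>UNIV. x $ i) \<le> \<epsilon>")
  case True
  show ?thesis
  proof (rule bad_near_point_of_box[OF perp_subset_torus b(1) _ b(3)])
    show "0 < d/2" "\<forall>i\<in>active_coords (perp S). d/2 < b $ i \<and> b $ i < 1 - d/2"
      using b(2) interior by auto
    show "\<forall>x\<in>perp S. (\<forall>i. \<bar>x $ i - b $ i\<bar> < d/2) \<longrightarrow> nonzero_sum_le \<epsilon> x"
    proof (intro ballI impI)
      fix x assume x: "x \<in> perp S" "\<forall>i. \<bar>x $ i - b $ i\<bar> < d/2"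
      obtain i where "i \<in> active_coords (perp S)"
        using b(3) by blast
      then have "d < b $ i"
        using interior by blast
      then have "0 < x $ i"
        using x(2)[rule_format, of i] unfolding abs_less_iff by linarith
      then show "nonzero_sum_le \<epsilon> x"
        using True x by (auto simp: nonzero_sum_le_def)
    qed
  qed
next
  case False
  then obtain x where x: "x \<in> perp S" "\<forall>i. \<bar>x $ i - b $ i\<bar> < d/2" "\<epsilon> < (\<Sum>i\<in>UNIV. x $ i)"
    by (auto simp: not_le)
  show ?thesis
    by (rule bad_near_point_of_reflection[OF b interior x(1,2), where \<epsilon> = \<epsilon>])
      (use sum_b x(3) in \<open>auto simp: nonzero_sum_le_def\<close>)
qed

lemma sections_or_near_point_nonzero_sum_le:
  "bad_in_sections (nonzero_sum_le \<epsilon>) (perp S) \<or> bad_near_point (nonzero_sum_le \<epsilon>) (perp S)"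
proof (cases "bad_in_sections (nonzero_sum_le \<epsilon>) (perp S)")
  case False
  then obtain b d where b: "b \<in> perp S" "nonzero_sum_le \<epsilon> b" "0 < d" "active_coords (perp S) \<noteq> {}"
    and interior: "\<forall>i\<in>active_coords (perp S). d < b $ i \<and> b $ i < 1 - d"
    using perp_subset_torus by (rule interior_bad_point) (simp add: nonzero_sum_le_def)
  consider "(\<Sum>i\<in>UNIV. b $ i) < \<epsilon>" | "(\<Sum>i\<in>UNIV. b $ i) = \<epsilon>"
    using b(2) by (fastforce simp: nonzero_sum_le_def)
  then have "bad_near_point (nonzero_sum_le \<epsilon>) (perp S)"
  proof cases
    case 1
    then show ?thesis
      by (rule bad_near_point_of_sum_lt[OF perp_subset_torus b(1,3,4) interior])
        (simp add: nonzero_sum_le_def)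
  next
    case 2
    then show ?thesis
      by (rule bad_near_point_nonzero_sum_le_of_sum_eq[OF b(1,3,4) interior])
  qed
  then show ?thesis
    by (rule disjI2)
qed simp

lemma mld_ge_iff: "ereal \<epsilon> \<le> mld G \<longleftrightarrow> (\<forall>g\<in>G. \<not> nonzero_sum_lt \<epsilon> g)"
  unfolding mld_def nonzero_sum_lt_def by (auto simp: le_Inf_iff not_less)

lemma mld_gt_iff:
  assumes "finite G"
  shows "ereal \<epsilon> < mld G \<longleftrightarrow> (\<forall>g\<in>G. \<not> nonzero_sum_le \<epsilon> g)"
proof -
  define X where "X = {ereal (\<Sum>i\<in>UNIV. g $ i) | g. g \<in> G \<and> g \<noteq> 0}"
  have "finite X"
    unfolding X_def using assms by auto
  then have "ereal \<epsilon> < Inf X \<longleftrightarrow> (\<forall>x\<in>X. ereal \<epsilon> < x)"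
    by (cases "X = {}") (simp_all add: cInf_eq_Min top_ereal_def)
  also have "\<dots> \<longleftrightarrow> (\<forall>g\<in>G. \<not> nonzero_sum_le \<epsilon> g)"
    unfolding X_def nonzero_sum_le_def by (auto simp: not_le)
  finally show ?thesis
    unfolding mld_def X_def .
qed

lemma series_family:
  assumes "\<And>S. bad_in_sections bad (perp S) \<or> bad_near_point bad (perp S)"
    and "\<And>G. qf_toric G \<Longrightarrow> P G \<longleftrightarrow> (\<forall>g\<in>G. \<not> bad g)"
  shows "\<exists>Ss :: ('n::finite) tseries set. finite Ss \<and> (\<forall>S\<in>Ss. is_series S) \<and>
           (\<forall>G. qf_toric G \<longrightarrow> (P G \<longleftrightarrow> (\<exists>S\<in>Ss. belongs G S)))"
proof -
  obtain Ss where Ss: "classifies bad (torus :: (real^'n) set) Ss"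
    using classifies_perp[OF assms(1), of "{}"] by auto
  have "P G \<longleftrightarrow> (\<exists>S\<in>Ss. belongs G S)" if "qf_toric G" for G
  proof -
    have "G \<subseteq> torus"
      using that by (simp add: qf_toric_def tsubgroup_def)
    then show ?thesis
      using Ss that assms(2)[OF that] unfolding classifies_def by blast
  qed
  then show ?thesis
    using Ss unfolding classifies_def by blast
qed

theorem theorem2p1:
  fixes \<epsilon> :: real
  assumes "\<epsilon> > 0"
  shows "(\<exists>Ss :: ('n::finite) tseries set. finite Ss \<and> (\<forall>S\<in>Ss. is_series S) \<and>
            (\<forall>G. qf_toric G \<longrightarrow> (mld G > ereal \<epsilon> \<longleftrightarrow> (\<exists>S\<in>Ss. belongs G S))))
       \<and> (\<exists>Ss :: ('n::finite) tseries set. finite Ss \<and> (\<forall>S\<in>Ss. is_series S) \<and>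
            (\<forall>G. qf_toric G \<longrightarrow> (mld G \<ge> ereal \<epsilon> \<longleftrightarrow> (\<exists>S\<in>Ss. belongs G S))))"
proof
  show "\<exists>Ss :: 'n tseries set. finite Ss \<and> (\<forall>S\<in>Ss. is_series S) \<and>
          (\<forall>G. qf_toric G \<longrightarrow> (mld G > ereal \<epsilon> \<longleftrightarrow> (\<exists>S\<in>Ss. belongs G S)))"
    by (rule series_family[OF sections_or_near_point_nonzero_sum_le]) (simp add: qf_toric_def mld_gt_iff)
  show "\<exists>Ss :: 'n tseries set. finite Ss \<and> (\<forall>S\<in>Ss. is_series S) \<and>
          (\<forall>G. qf_toric G \<longrightarrow> (mld G \<ge> ereal \<epsilon> \<longleftrightarrow> (\<exists>S\<in>Ss. belongs G S)))"
    by (rule series_family[OF sections_or_near_point_nonzero_sum_lt]) (simp add: mld_ge_iff)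
qed

end
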